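(* Let $T\in\mathbb{R}$ and let $S:[0,1]\to\mathbb{R}$ be continuous with $S(0)=S(1)=0$. For $x,y\in\mathbb{R}$ set $x\oplus_S y=\min_{p\in[0,1]}\big(px+(1-p)y-T\,S(p)\big)$. Let $\mathbf{T}$ be an $(n,2)$-tree with $n\ge2$. Then for all $x_1,\ldots,x_n\in\mathbb{R}$, $$(x_1\oplus_S\cdots\oplus_S x_n)_{\mathbf{T}}=\min_{p\in\Delta_n}\Big(\sum_{i=1}^n p_ix_i-T\,S_{\mathbf{T}}(p_1,\ldots,p_n)\Big).$$
   Context: An $(n,2)$-tree is a finite rooted tree in which every vertex is either a leaf or has exactly two children, ordered as a left and a right child, and whose $n$ leaves are labelled bijectively by $\{1,\ldots,n\}$. $\Delta_n=\{p\in[0,\infty)^n:\sum_ip_i=1\}$. For such a tree (or a subtree, whose leaves carry a subset $L$ of labels) define recursively: if the tree is a single leaf labelled $i$, then its value is $x_i$ and its entropy is $0$; otherwise, with left subtree $\mathbf{L}$ (label set $L$) and right subtree $\mathbf{D}$ (label set $D$), the value is $(x_1\oplus_S\cdots\oplus_S x_n)_{\mathbf{T}}=(\text{value of }\mathbf{L})\oplus_S(\text{value of }\mathbf{D})$, and for $p$ a probability vector indexed by the labels, with $P_L=\sum_{i\in L}p_i$, $P_D=\sum_{i\in D}p_i$, $$S_{\mathbf{T}}(p)=S(P_L)+P_L\,S_{\mathbf{L}}\big((p_i/P_L)_{i\in L}\big)+P_D\,S_{\mathbf{D}}\big((p_i/P_D)_{i\in D}\big),$$ where a term $P\,S_{\mathbf{A}}(\cdot/P)$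 is taken to be $0$ when $P=0$. *)

theory Defs
  imports "HOL-Analysis.Analysis"
begin

datatype btree = Leaf nat | Node btree btree

fun leaves :: "btree \<Rightarrow> nat list" where
  "leaves (Leaf i) = [i]"
| "leaves (Node l r) = leaves l @ leaves r"

definition n2_tree :: "nat \<Rightarrow> btree \<Rightarrow> bool" where
  "n2_tree n t \<longleftrightarrow> distinct (leaves t) \<and> set (leaves t) = {1..n}"

text \<open>x \<oplus>_S y = min over p in [0,1] of (p x + (1-p) y - T S(p)); the minimum exists
  by continuity of S, so it coincides with the infimum.\<close>
definition oplusS :: "real \<Rightarrow> (real \<Rightarrow> real) \<Rightarrow> real \<Rightarrow> real \<Rightarrow> real" where
  "oplusS T S x y = Inf ((\<lambda>p. p * x + (1 - p) * y - T * S p) ` {0..1})"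

fun tree_val :: "real \<Rightarrow> (real \<Rightarrow> real) \<Rightarrow> btree \<Rightarrow> (nat \<Rightarrow> real) \<Rightarrow> real" where
  "tree_val T S (Leaf i) x = x i"
| "tree_val T S (Node l r) x = oplusS T S (tree_val T S l x) (tree_val T S r x)"

fun tree_ent :: "(real \<Rightarrow> real) \<Rightarrow> btree \<Rightarrow> (nat \<Rightarrow> real) \<Rightarrow> real" where
  "tree_ent S (Leaf i) p = 0"
| "tree_ent S (Node l r) p =
     (let PL = (\<Sum>i\<in>set (leaves l). p i); PD = (\<Sum>i\<in>set (leaves r). p i) in
      S PL
      + (if PL = 0 then 0 else PL * tree_ent S l (\<lambda>i. p i / PL))
      + (if PD = 0 then 0 else PD * tree_ent S r (\<lambda>i. p i / PD)))"

definition prob_simplex :: "nat \<Rightarrow> (nat \<Rightarrow> real) set" where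
  "prob_simplex n = {p. (\<forall>i\<in>{1..n}. 0 \<le> p i) \<and> (\<Sum>i=1..n. p i) = 1}"

end

theory Submission
  imports Defs
begin

text \<open>At an inner node every distribution \<open>p\<close> on the leaves
  splits into a weight \<open>q\<close> on the left subtree and the two conditional distributions
  \<open>p/q\<close>, \<open>p/(1-q)\<close>; the entropy recursion is exactly this chain rule. Minimising first
  over the conditional distributions (induction hypothesis) and then over \<open>q\<close> (the
  definition of \<open>\<oplus>\<^sub>S\<close>) gives the value of the node.\<close>

definition simplex_on :: "nat set \<Rightarrow> (nat \<Rightarrow> real) set" where
  "simplex_on A = {p. (\<forall>i\<in>A. 0 \<le> p i) \<and> (\<Sum>i\<in>A. p i) = 1}"

lemma prob_simplex_eq_simplex_on: "prob_simplex n = simplex_on {1..n}"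
  by (simp add: prob_simplex_def simplex_on_def)

lemma tree_ent_cong:
  "(\<And>i. i \<in> set (leaves t) \<Longrightarrow> p i = p' i) \<Longrightarrow> tree_ent S t p = tree_ent S t p'"
proof (induction t arbitrary: p p')
  case (Leaf i)
  then show ?case by simp
next
  case (Node l r)
  have "(\<Sum>i\<in>set (leaves l). p i) = (\<Sum>i\<in>set (leaves l). p' i)"
    and "(\<Sum>i\<in>set (leaves r). p i) = (\<Sum>i\<in>set (leaves r). p' i)"
    using Node.prems by (auto intro: sum.cong)
  moreover have "tree_ent S l (\<lambda>i. p i / c) = tree_ent S l (\<lambda>i. p' i / c)"
    and "tree_ent S r (\<lambda>i. p i / c) = tree_ent S r (\<lambda>i. p' i / c)" for c
    using Node.prems by (auto intro: Node.IH)
  ultimately show ?case by (simp add: Let_def)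
qed

lemma tree_ent_Node_split:
  assumes "(\<Sum>i\<in>set (leaves l). p i) = q" and "(\<Sum>i\<in>set (leaves r). p i) = 1 - q"
  shows "tree_ent S (Node l r) p = S q
      + (if q = 0 then 0 else q * tree_ent S l (\<lambda>i. p i / q))
      + (if 1 - q = 0 then 0 else (1 - q) * tree_ent S r (\<lambda>i. p i / (1 - q)))"
  by (simp only: tree_ent.simps Let_def assms)

lemma oplusS_le:
  assumes "q \<in> {0..1}" and "continuous_on {0..1} S"
  shows "oplusS T S a b \<le> q * a + (1 - q) * b - T * S q"
proof -
  have "continuous_on {0..1} (\<lambda>p. p * a + (1 - p) * b - T * S p)"
    by (intro continuous_intros assms(2))
  then have "compact ((\<lambda>p. p * a + (1 - p) * b - T * S p) ` {0..1})"
    by (rule compact_continuous_image[OF _ compact_Icc])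
  then show ?thesis
    unfolding oplusS_def using assms(1)
    by (intro cInf_lower imageI bounded_imp_bdd_below compact_imp_bounded)
qed

lemma oplusS_attained:
  assumes "continuous_on {0..1} S"
  obtains q where "q \<in> {0..1}" and "oplusS T S a b = q * a + (1 - q) * b - T * S q"
proof -
  define f where "f p = p * a + (1 - p) * b - T * S p" for p
  have "continuous_on {0..1} f"
    unfolding f_def by (intro continuous_intros assms)
  from continuous_attains_inf[OF compact_Icc _ this]
  obtain q where q: "q \<in> {0..1}" and min: "\<And>p. p \<in> {0..1} \<Longrightarrow> f q \<le> f p"
    by auto
  have "oplusS T S a b = f q"
    unfolding oplusS_def f_def[symmetric] using q min by (intro cInf_eq_minimum) auto
  with q that show ?thesis unfolding f_def by blast
qed

text \<open>The two lemmas below describe one subtree's share of the objective after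
  restricting \<open>p\<close> to it, where \<open>q\<close> is the mass of the subtree; the guard \<open>q = 0\<close>
  mirrors the convention in \<open>tree_ent\<close>.\<close>

lemma scaled_objective_ge:
  fixes a q :: real and A :: "nat set"
  assumes "finite A" and nonneg: "\<forall>i\<in>A. 0 \<le> p i" and q: "(\<Sum>i\<in>A. p i) = q"
    and min: "\<And>p'. p' \<in> simplex_on A \<Longrightarrow> a \<le> (\<Sum>i\<in>A. p' i * x i) - T * E p'"
  shows "q * a \<le> (\<Sum>i\<in>A. p i * x i) - T * (if q = 0 then 0 else q * E (\<lambda>i. p i / q))"
proof (cases "q = 0")
  case True
  then have "\<forall>i\<in>A. p i = 0" using sum_nonneg_eq_0_iff[OF \<open>finite A\<close>] nonneg q by auto
  then show ?thesis using True by simp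
next
  case False
  then have "q > 0" using q nonneg sum_nonneg[of A p] by force
  have "(\<Sum>i\<in>A. p i / q) = 1"
    using q False by (simp add: sum_divide_distrib[symmetric])
  then have "(\<lambda>i. p i / q) \<in> simplex_on A"
    using nonneg \<open>q > 0\<close> by (simp add: simplex_on_def)
  from min[OF this] have "a \<le> (\<Sum>i\<in>A. p i * x i) / q - T * E (\<lambda>i. p i / q)"
    by (simp add: sum_divide_distrib)
  then have "q * a \<le> q * ((\<Sum>i\<in>A. p i * x i) / q - T * E (\<lambda>i. p i / q))"
    using \<open>q > 0\<close> by simp
  then show ?thesis
    using False by (simp add: algebra_simps)
qed

lemma scaled_objective_eq:
  fixes a q :: real and A :: "nat set"
  assumes p: "\<forall>i\<in>A. p i = q * p' i"
    and a: "a = (\<Sum>i\<in>A. p' i * x i) - T * E p'"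
    and cong: "\<And>p''. \<forall>i\<in>A. p'' i = p' i \<Longrightarrow> E p'' = E p'"
  shows "(\<Sum>i\<in>A. p i * x i) - T * (if q = 0 then 0 else q * E (\<lambda>i. p i / q)) = q * a"
proof (cases "q = 0")
  case True
  then show ?thesis using p by simp
next
  case False
  then have "E (\<lambda>i. p i / q) = E p'" using p by (intro cong) simp
  moreover have "(\<Sum>i\<in>A. p i * x i) = q * (\<Sum>i\<in>A. p' i * x i)"
    using p by (simp add: sum_distrib_left mult.assoc)
  ultimately show ?thesis using False by (simp add: a algebra_simps)
qed

lemma sum_leaves_Node:
  fixes g :: "nat \<Rightarrow> real"
  assumes "distinct (leaves (Node l r))"
  shows "(\<Sum>i\<in>set (leaves (Node l r)). g i) = (\<Sum>i\<in>set (leaves l). g i) + (\<Sum>i\<in>set (leaves r). g i)"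
  using assms by (simp add: sum.union_disjoint)

lemma tree_val_le_objective:
  assumes "continuous_on {0..1} S" and "distinct (leaves t)"
    and "p \<in> simplex_on (set (leaves t))"
  shows "tree_val T S t x \<le> (\<Sum>i\<in>set (leaves t). p i * x i) - T * tree_ent S t p"
  using assms(2,3)
proof (induction t arbitrary: p)
  case (Leaf i)
  then show ?case by (simp add: simplex_on_def)
next
  case (Node l r)
  let ?L = "set (leaves l)" and ?D = "set (leaves r)"
  define q where "q = (\<Sum>i\<in>?L. p i)"
  have nonneg: "\<forall>i\<in>?L. 0 \<le> p i" "\<forall>i\<in>?D. 0 \<le> p i"
    using Node.prems(2) by (auto simp: simplex_on_def)
  have mass_r: "(\<Sum>i\<in>?D. p i) = 1 - q"
    using Node.prems sum_leaves_Node[of l r p] by (simp add: simplex_on_def q_def)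
  have "q \<in> {0..1}"
    using sum_nonneg[of ?L p] sum_nonneg[of ?D p] nonneg mass_r q_def by auto
  have "tree_val T S (Node l r) x \<le> q * tree_val T S l x + (1 - q) * tree_val T S r x - T * S q"
    using oplusS_le[OF \<open>q \<in> {0..1}\<close> assms(1)] by simp
  also have "\<dots> \<le> (\<Sum>i\<in>set (leaves (Node l r)). p i * x i) - T * tree_ent S (Node l r) p"
  proof -
    have "q * tree_val T S l x \<le> (\<Sum>i\<in>?L. p i * x i)
        - T * (if q = 0 then 0 else q * tree_ent S l (\<lambda>i. p i / q))"
      using Node.prems(1) nonneg(1) q_def by (intro scaled_objective_ge Node.IH(1)) auto
    moreover have "(1 - q) * tree_val T S r x \<le> (\<Sum>i\<in>?D. p i * x i)
        - T * (if 1 - q = 0 then 0 else (1 - q) * tree_ent S r (\<lambda>i. p i / (1 - q)))"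
      using Node.prems(1) nonneg(2) mass_r by (intro scaled_objective_ge Node.IH(2)) auto
    ultimately show ?thesis
      unfolding sum_leaves_Node[OF Node.prems(1)] tree_ent_Node_split[OF q_def[symmetric] mass_r]
      by (simp add: algebra_simps)
  qed
  finally show ?case .
qed

lemma tree_val_attained:
  assumes "continuous_on {0..1} S" and "distinct (leaves t)"
  obtains p where "p \<in> simplex_on (set (leaves t))"
    and "tree_val T S t x = (\<Sum>i\<in>set (leaves t). p i * x i) - T * tree_ent S t p"
  using assms(2)
proof (induction t arbitrary: thesis)
  case (Leaf i)
  show ?case using Leaf.prems(1)[of "\<lambda>_. 1"] by (simp add: simplex_on_def)
next
  case (Node l r)
  let ?L = "set (leaves l)" and ?D = "set (leaves r)"
  have distinct: "distinct (leaves l)" "distinct (leaves r)" and disjoint: "?L \<inter> ?D = {}"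
    using Node.prems(2) by auto
  obtain pl where pl: "pl \<in> simplex_on ?L"
    and val_l: "tree_val T S l x = (\<Sum>i\<in>?L. pl i * x i) - T * tree_ent S l pl"
    using Node.IH(1)[OF _ distinct(1)] by blast
  obtain pr where pr: "pr \<in> simplex_on ?D"
    and val_r: "tree_val T S r x = (\<Sum>i\<in>?D. pr i * x i) - T * tree_ent S r pr"
    using Node.IH(2)[OF _ distinct(2)] by blast
  obtain q where "q \<in> {0..1}" and val:
    "tree_val T S (Node l r) x = q * tree_val T S l x + (1 - q) * tree_val T S r x - T * S q"
    using oplusS_attained[OF assms(1)] unfolding tree_val.simps .
  define p where "p i = (if i \<in> ?L then q * pl i else (1 - q) * pr i)" for i
  have on_l: "\<forall>i\<in>?L. p i = q * pl i" and on_r: "\<forall>i\<in>?D. p i = (1 - q) * pr i"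
    using disjoint by (auto simp: p_def)
  have mass_l: "(\<Sum>i\<in>?L. p i) = q" and mass_r: "(\<Sum>i\<in>?D. p i) = 1 - q"
    using on_l on_r pl pr by (simp_all add: simplex_on_def sum_distrib_left[symmetric])
  have "p \<in> simplex_on (set (leaves (Node l r)))"
    using pl pr \<open>q \<in> {0..1}\<close> on_r mass_l mass_r sum_leaves_Node[OF Node.prems(2), of p]
    by (auto simp: simplex_on_def p_def)
  moreover have "tree_val T S (Node l r) x
      = (\<Sum>i\<in>set (leaves (Node l r)). p i * x i) - T * tree_ent S (Node l r) p"
  proof -
    have "(\<Sum>i\<in>?L. p i * x i) - T * (if q = 0 then 0 else q * tree_ent S l (\<lambda>i. p i / q))
        = q * tree_val T S l x"
      using on_l val_l by (intro scaled_objective_eq) (auto intro: tree_ent_cong)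
    moreover have "(\<Sum>i\<in>?D. p i * x i)
        - T * (if 1 - q = 0 then 0 else (1 - q) * tree_ent S r (\<lambda>i. p i / (1 - q)))
        = (1 - q) * tree_val T S r x"
      using on_r val_r by (intro scaled_objective_eq) (auto intro: tree_ent_cong)
    ultimately show ?thesis
      unfolding val sum_leaves_Node[OF Node.prems(2)] tree_ent_Node_split[OF mass_l mass_r]
      by (simp add: algebra_simps)
  qed
  ultimately show ?case by (rule Node.prems(1))
qed

theorem theorem10p2:
  fixes T :: real and S :: "real \<Rightarrow> real" and n :: nat and t :: btree
    and x :: "nat \<Rightarrow> real"
  assumes "continuous_on {0..1} S" and "S 0 = 0" and "S 1 = 0"
    and "n \<ge> 2" and "n2_tree n t"
  shows "(\<exists>p\<in>prob_simplex n. tree_val T S t x = (\<Sum>i=1..n. p i * x i) - T * tree_ent S t p)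
       \<and> (\<forall>p\<in>prob_simplex n. tree_val T S t x \<le> (\<Sum>i=1..n. p i * x i) - T * tree_ent S t p)"
proof -
  have distinct: "distinct (leaves t)" and labels: "set (leaves t) = {1..n}"
    using assms(5) by (auto simp: n2_tree_def)
  obtain p where "p \<in> prob_simplex n"
    and "tree_val T S t x = (\<Sum>i=1..n. p i * x i) - T * tree_ent S t p"
    using tree_val_attained[OF assms(1) distinct] unfolding labels prob_simplex_eq_simplex_on
    by blast
  moreover have "\<forall>p\<in>prob_simplex n.
      tree_val T S t x \<le> (\<Sum>i=1..n. p i * x i) - T * tree_ent S t p"
    using tree_val_le_objective[OF assms(1) distinct] unfolding labels prob_simplex_eq_simplex_on
    by blast
  ultimately show ?thesis by blast
qed

end
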